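(* Let $G=(V,E)$ be a finite simple connected graph, and let $\varphi$ be a failure pattern having at least one correct node, and set $R(\varphi)=\min_{v\in V}\mathrm{ecc}(v,\varphi)$. Then no algorithm (oblivious or not), even when the failure pattern $\varphi$ is known to all nodes in advance, solves binary consensus (inputs in $\{0,1\}$) in $G$ under failure pattern $\varphi$ in fewer than $R(\varphi)$ rounds. Consequently, under the $t$-resilient model consensus in $G$ requires at least $\max_{\varphi\in\Phi^{(t)}_{\mathrm{all}}}\min_{v\in V}\mathrm{ecc}(v,\varphi)$ rounds.
   Context: $N(v)$ is the neighbourhood of $v$. Synchronous rounds; each node sends a message to every neighbour in each round, receives its neighbours' messages, and computes; a node's state can only depend on information received along the message transmissions that occur. Failure patterns. A failure pattern is a set $\varphi=\{(v,F_v,f_v): v\in F\}$ with $F\subseteq V$, integers $f_v\ge1$ and nonempty $F_v\subseteq N(v)$: $v$ acts normally in rounds $<f_v$, in round $f_v$ its messages reach exactly $N(v)\setminus F_v$, afterwards it sends nothing. Nodes in $F$ are faulty, others correct. $\Phi^{(t)}_{\mathrm{all}}$ is the set of failure patterns with $|F|\le t$. Causal paths and eccentricity. A causal path w.r.t. $\varphi$ from $v$ to $v'$ is $u_1=v,\dots,u_q=v'$ with $u_{i+1}\in N(u_i)$, $u_i$ not crashed during rounds $1,\dots,i-1$, and $u_{i+1}\notin F_{u_i}$ if $u_i$ crashes at round $i$; length $q-1$. $\mathrm{ecc}(v,\varphi)$ is the maximum over correct $v'$ of the minimum length of a causal path from $v$ to $v'$ ($\infty$ if some correct $v'$ has none).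 Consensus. Every correct node outputs a value; all correct nodes output the same value, and it equals the input of some node. *)

theory Defs
  imports Main "HOL-Library.Extended_Nat"
begin

definition simple_graph :: "'v set \<Rightarrow> ('v \<Rightarrow> 'v \<Rightarrow> bool) \<Rightarrow> bool" where
  "simple_graph V E \<longleftrightarrow> finite V \<and> (\<forall>u v. E u v \<longrightarrow> u \<in> V \<and> v \<in> V)
     \<and> (\<forall>u v. E u v \<longrightarrow> E v u) \<and> (\<forall>u. \<not> E u u)"

definition connected_graph :: "'v set \<Rightarrow> ('v \<Rightarrow> 'v \<Rightarrow> bool) \<Rightarrow> bool" where
  "connected_graph V E \<longleftrightarrow> V \<noteq> {} \<and> (\<forall>u\<in>V. \<forall>v\<in>V. E\<^sup>*\<^sup>* u v)"

definition nbhd :: "('v \<Rightarrow> 'v \<Rightarrow> bool) \<Rightarrow> 'v \<Rightarrow> 'v set" where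
  "nbhd E v = {u. E v u}"

text \<open>A failure pattern maps each faulty node v to Some (F_v, f_v) and each correct node to None.\<close>
type_synonym 'v failure_pattern = "'v \<Rightarrow> ('v set \<times> nat) option"

definition wf_pattern :: "'v set \<Rightarrow> ('v \<Rightarrow> 'v \<Rightarrow> bool) \<Rightarrow> 'v failure_pattern \<Rightarrow> bool" where
  "wf_pattern V E \<phi> \<longleftrightarrow> (\<forall>v. \<phi> v \<noteq> None \<longrightarrow> v \<in> V)
     \<and> (\<forall>v Fv f. \<phi> v = Some (Fv, f) \<longrightarrow> 1 \<le> f \<and> Fv \<noteq> {} \<and> Fv \<subseteq> nbhd E v)"

definition faulty :: "'v failure_pattern \<Rightarrow> 'v set" where
  "faulty \<phi> = {v. \<phi> v \<noteq> None}"

definition correct :: "'v set \<Rightarrow> 'v failure_pattern \<Rightarrow> 'v \<Rightarrow> bool" where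
  "correct V \<phi> v \<longleftrightarrow> v \<in> V \<and> \<phi> v = None"

definition Phi_all :: "'v set \<Rightarrow> ('v \<Rightarrow> 'v \<Rightarrow> bool) \<Rightarrow> nat \<Rightarrow> 'v failure_pattern set" where
  "Phi_all V E t = {\<phi>. wf_pattern V E \<phi> \<and> card (faulty \<phi>) \<le> t}"

definition delivered :: "('v \<Rightarrow> 'v \<Rightarrow> bool) \<Rightarrow> 'v failure_pattern \<Rightarrow> nat \<Rightarrow> 'v \<Rightarrow> 'v \<Rightarrow> bool" where
  "delivered E \<phi> r u w \<longleftrightarrow> E u w \<and>
     (case \<phi> u of None \<Rightarrow> True | Some (Fu, fu) \<Rightarrow> r < fu \<or> (r = fu \<and> w \<notin> Fu))"

definition crashed_before :: "'v failure_pattern \<Rightarrow> 'v \<Rightarrow> nat \<Rightarrow> bool" where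
  "crashed_before \<phi> u i \<longleftrightarrow> (case \<phi> u of None \<Rightarrow> False | Some (_, f) \<Rightarrow> f < i)"

text \<open>List us = [u_1,...,u_q]; the list index j corresponds to u_(j+1), round j+1.\<close>
definition causal_path :: "('v \<Rightarrow> 'v \<Rightarrow> bool) \<Rightarrow> 'v failure_pattern \<Rightarrow> 'v list \<Rightarrow> bool" where
  "causal_path E \<phi> us \<longleftrightarrow> us \<noteq> [] \<and>
     (\<forall>j. Suc j < length us \<longrightarrow>
        E (us ! j) (us ! Suc j) \<and>
        \<not> crashed_before \<phi> (us ! j) (Suc j) \<and>
        (\<forall>Fu. \<phi> (us ! j) = Some (Fu, Suc j) \<longrightarrow> us ! Suc j \<notin> Fu))"

definition dist_causal :: "('v \<Rightarrow> 'v \<Rightarrow> bool) \<Rightarrow> 'v failure_pattern \<Rightarrow> 'v \<Rightarrow> 'v \<Rightarrow> enat" where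
  "dist_causal E \<phi> v v' = (INF us \<in> {us. causal_path E \<phi> us \<and> hd us = v \<and> last us = v'}.
                               enat (length us - 1))"

definition ecc :: "'v set \<Rightarrow> ('v \<Rightarrow> 'v \<Rightarrow> bool) \<Rightarrow> 'v failure_pattern \<Rightarrow> 'v \<Rightarrow> enat" where
  "ecc V E \<phi> v = (SUP v' \<in> {v'. correct V \<phi> v'}. dist_causal E \<phi> v v')"

definition R_bound :: "'v set \<Rightarrow> ('v \<Rightarrow> 'v \<Rightarrow> bool) \<Rightarrow> 'v failure_pattern \<Rightarrow> enat" where
  "R_bound V E \<phi> = (INF v \<in> V. ecc V E \<phi> v)"

text \<open>A node knows its identity
  (and, since the algorithm is arbitrary, the graph and the failure pattern may be hard-wired).\<close>
record ('v, 's, 'm) algorithm =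
  alg_init :: "'v \<Rightarrow> bool \<Rightarrow> 's"
  alg_msg :: "nat \<Rightarrow> 'v \<Rightarrow> 'v \<Rightarrow> 's \<Rightarrow> 'm"
  alg_trans :: "nat \<Rightarrow> 'v \<Rightarrow> 's \<Rightarrow> ('v \<Rightarrow> 'm option) \<Rightarrow> 's"
  alg_out :: "'v \<Rightarrow> 's \<Rightarrow> bool"

fun run :: "('v \<Rightarrow> 'v \<Rightarrow> bool) \<Rightarrow> ('v, 's, 'm) algorithm \<Rightarrow> 'v failure_pattern
             \<Rightarrow> ('v \<Rightarrow> bool) \<Rightarrow> nat \<Rightarrow> 'v \<Rightarrow> 's" where
  "run E A \<phi> x 0 v = alg_init A v (x v)"
| "run E A \<phi> x (Suc r) v =
     alg_trans A (Suc r) v (run E A \<phi> x r v)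
       (\<lambda>u. if delivered E \<phi> (Suc r) u v then Some (alg_msg A (Suc r) u v (run E A \<phi> x r u))
            else None)"

definition solves_consensus_in :: "'v set \<Rightarrow> ('v \<Rightarrow> 'v \<Rightarrow> bool) \<Rightarrow> ('v, 's, 'm) algorithm
     \<Rightarrow> 'v failure_pattern \<Rightarrow> nat \<Rightarrow> bool" where
  "solves_consensus_in V E A \<phi> k \<longleftrightarrow> (\<forall>x :: 'v \<Rightarrow> bool.
      (\<forall>v w. correct V \<phi> v \<longrightarrow> correct V \<phi> w \<longrightarrow>
          alg_out A v (run E A \<phi> x k v) = alg_out A w (run E A \<phi> x k w)) \<and>
      (\<forall>v. correct V \<phi> v \<longrightarrow> (\<exists>u\<in>V. alg_out A v (run E A \<phi> x k v) = x u)))"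

end

theory Submission
  imports Defs
begin

text \<open>After r rounds the state of a node w depends only on the inputs of nodes u that reach w
  by a causal path of length at most r. If k < R(\<phi>), every node v therefore has a correct node
  whose state after k rounds does not see v's input. Start from the all-False input, where
  validity forces every correct node to decide False, and switch the inputs to True one node
  at a time: flipping v leaves the decision of a correct node not reached from v unchanged,
  so by agreement all correct nodes keep deciding False. At the all-True input this
  contradicts validity.\<close>

definition causally_reaches ::
    "('v \<Rightarrow> 'v \<Rightarrow> bool) \<Rightarrow> 'v failure_pattern \<Rightarrow> nat \<Rightarrow> 'v \<Rightarrow> 'v \<Rightarrow> bool" where
  "causally_reaches E \<phi> r u w \<longleftrightarrow>
     (\<exists>us. causal_path E \<phi> us \<and> hd us = u \<and> last us = w \<and> length us - 1 \<le> r)"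

lemma causal_path_snoc:
  assumes path: "causal_path E \<phi> us" and "last us = u" and "length us - 1 \<le> r"
    and "delivered E \<phi> (Suc r) u w"
  shows "causal_path E \<phi> (us @ [w])"
  unfolding causal_path_def
proof (rule conjI, simp, intro allI impI)
  fix j assume j: "Suc j < length (us @ [w])"
  have "us \<noteq> []" using path by (simp add: causal_path_def)
  show "E ((us @ [w]) ! j) ((us @ [w]) ! Suc j) \<and>
      \<not> crashed_before \<phi> ((us @ [w]) ! j) (Suc j) \<and>
      (\<forall>Fu. \<phi> ((us @ [w]) ! j) = Some (Fu, Suc j) \<longrightarrow> (us @ [w]) ! Suc j \<notin> Fu)"
  proof (cases "Suc j < length us")
    case True
    then show ?thesis using path by (simp add: causal_path_def nth_append)
  next
    case False
    with j have "j = length us - 1" by simp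
    with \<open>us \<noteq> []\<close> \<open>last us = u\<close> have "(us @ [w]) ! j = u" "(us @ [w]) ! Suc j = w"
      by (simp_all add: nth_append last_conv_nth)
    with \<open>j = length us - 1\<close> show ?thesis using assms(3,4)
      by (auto simp: delivered_def crashed_before_def split: option.splits)
  qed
qed

lemma causally_reaches_refl: "causally_reaches E \<phi> r w w"
  unfolding causally_reaches_def by (intro exI[of _ "[w]"]) (simp add: causal_path_def)

lemma causally_reaches_Suc: "causally_reaches E \<phi> r u w \<Longrightarrow> causally_reaches E \<phi> (Suc r) u w"
  unfolding causally_reaches_def by fastforce

lemma causally_reaches_delivered:
  assumes "causally_reaches E \<phi> r u' u" and "delivered E \<phi> (Suc r) u w"
  shows "causally_reaches E \<phi> (Suc r) u' w"
proof -
  obtain us where us: "causal_path E \<phi> us" "hd us = u'" "last us = u" "length us - 1 \<le> r"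
    using assms(1) unfolding causally_reaches_def by blast
  then have "us \<noteq> []" by (simp add: causal_path_def)
  show ?thesis
    unfolding causally_reaches_def
  proof (intro exI conjI)
    show "causal_path E \<phi> (us @ [w])" by (rule causal_path_snoc[OF us(1,3,4) assms(2)])
    show "hd (us @ [w]) = u'" using us(2) \<open>us \<noteq> []\<close> by simp
    show "length (us @ [w]) - 1 \<le> Suc r" using us(4) by simp
  qed simp
qed

lemma run_depends_on_causal_past:
  assumes "\<And>u. causally_reaches E \<phi> r u w \<Longrightarrow> x u = y u"
  shows "run E A \<phi> x r w = run E A \<phi> y r w"
  using assms
proof (induction r arbitrary: w)
  case 0
  then have "x w = y w" using causally_reaches_refl by metis
  then show ?case by simp
next
  case (Suc r)
  have "run E A \<phi> x r w = run E A \<phi> y r w"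
    by (rule Suc.IH, rule Suc.prems, erule causally_reaches_Suc)
  moreover have "run E A \<phi> x r u = run E A \<phi> y r u" if "delivered E \<phi> (Suc r) u w" for u
    by (rule Suc.IH, rule Suc.prems, erule causally_reaches_delivered, rule that)
  ultimately show ?case by (simp cong: if_cong)
qed

lemma dist_causal_le_if_causally_reaches:
  assumes "causally_reaches E \<phi> r u w"
  shows "dist_causal E \<phi> u w \<le> enat r"
proof -
  obtain us where us: "causal_path E \<phi> us" "hd us = u" "last us = w" "length us - 1 \<le> r"
    using assms unfolding causally_reaches_def by blast
  then have "dist_causal E \<phi> u w \<le> enat (length us - 1)"
    unfolding dist_causal_def by (intro INF_lower) auto
  also have "\<dots> \<le> enat r" using us(4) by simp
  finally show ?thesis .
qed

lemma unreached_correct_node_if_less_R_bound: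
  assumes "enat k < R_bound V E \<phi>" and "v \<in> V"
  obtains v' where "correct V \<phi> v'" and "\<not> causally_reaches E \<phi> k v v'"
proof -
  have "R_bound V E \<phi> \<le> ecc V E \<phi> v"
    unfolding R_bound_def using \<open>v \<in> V\<close> by (rule INF_lower)
  with assms(1) have "enat k < ecc V E \<phi> v" by simp
  then obtain v' where "correct V \<phi> v'" and far: "enat k < dist_causal E \<phi> v v'"
    unfolding ecc_def by (auto simp: less_SUP_iff)
  moreover have "\<not> causally_reaches E \<phi> k v v'"
    using dist_causal_le_if_causally_reaches[of E \<phi> k v v'] far by auto
  ultimately show ?thesis using that by blast
qed

lemma consensus_impossible_if_every_node_unreached:
  assumes "finite V" and "\<exists>v. correct V \<phi> v"
    and unreached: "\<And>v. v \<in> V \<Longrightarrow> \<exists>v'. correct V \<phi> v' \<and> \<not> causally_reaches E \<phi> k v v'"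
  shows "\<not> solves_consensus_in V E A \<phi> k"
proof
  assume "solves_consensus_in V E A \<phi> k"
  define decision where "decision T w = alg_out A w (run E A \<phi> (\<lambda>u. u \<in> T) k w)" for T w
  have agreement: "decision T v = decision T w" if "correct V \<phi> v" "correct V \<phi> w" for T v w
    using \<open>solves_consensus_in V E A \<phi> k\<close> that
    unfolding solves_consensus_in_def decision_def by blast
  have validity: "\<exists>u\<in>V. decision T w = (u \<in> T)" if "correct V \<phi> w" for T w
    using \<open>solves_consensus_in V E A \<phi> k\<close> that
    unfolding solves_consensus_in_def decision_def by blast
  have decides_False: "\<not> decision T w" if "T \<subseteq> V" "correct V \<phi> w" for T w
    using finite_subset[OF that(1) \<open>finite V\<close>] that
  proof (induction T arbitrary: w rule: finite_induct)
    case empty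
    then show ?case using validity by blast
  next
    case (insert v T)
    obtain v' where v': "correct V \<phi> v'" "\<not> causally_reaches E \<phi> k v v'"
      using unreached insert.prems(1) by blast
    have "run E A \<phi> (\<lambda>u. u \<in> insert v T) k v' = run E A \<phi> (\<lambda>u. u \<in> T) k v'"
      by (rule run_depends_on_causal_past) (use v'(2) in auto)
    then have "decision (insert v T) v' = decision T v'"
      unfolding decision_def by simp
    moreover have "\<not> decision T v'" using insert.IH insert.prems(1) v'(1) by simp
    ultimately show ?case using agreement[OF v'(1) insert.prems(2)] by simp
  qed
  obtain w where "correct V \<phi> w" using assms(2) by blast
  with decides_False[of V w] validity[of w V] show False by auto
qed

lemma R_bound_le_if_solves_consensus:
  assumes "finite V" and "\<exists>v. correct V \<phi> v" and "solves_consensus_in V E A \<phi> k"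
  shows "R_bound V E \<phi> \<le> enat k"
proof (rule ccontr)
  assume "\<not> R_bound V E \<phi> \<le> enat k"
  then have "enat k < R_bound V E \<phi>" by (simp add: not_le)
  then have "\<exists>v'. correct V \<phi> v' \<and> \<not> causally_reaches E \<phi> k v v'" if "v \<in> V" for v
    using that by (rule unreached_correct_node_if_less_R_bound) blast
  with assms show False using consensus_impossible_if_every_node_unreached by blast
qed

lemma R_bound_eq_0_if_no_correct_node:
  assumes "V \<noteq> {}" and "\<nexists>v. correct V \<phi> v"
  shows "R_bound V E \<phi> = 0"
proof -
  obtain v where "v \<in> V" using assms(1) by blast
  have "R_bound V E \<phi> \<le> ecc V E \<phi> v"
    unfolding R_bound_def using \<open>v \<in> V\<close> by (rule INF_lower)
  also have "\<dots> = 0" using assms(2) by (simp add: ecc_def bot_enat_def)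
  finally show ?thesis by simp
qed

theorem mainTheorem7:
  fixes V :: "'v set" and E :: "'v \<Rightarrow> 'v \<Rightarrow> bool"
  assumes "simple_graph V E" and "connected_graph V E"
  shows "(\<forall>(\<phi> :: 'v failure_pattern) (A :: ('v, 's, 'm) algorithm) (k :: nat).
            wf_pattern V E \<phi> \<longrightarrow> (\<exists>v. correct V \<phi> v) \<longrightarrow> enat k < R_bound V E \<phi> \<longrightarrow>
            \<not> solves_consensus_in V E A \<phi> k)
       \<and> (\<forall>(t :: nat) (A :: ('v, 's, 'm) algorithm) (k :: nat).
            (\<forall>\<phi> \<in> Phi_all V E t. solves_consensus_in V E A \<phi> k) \<longrightarrow>
            (SUP \<phi> \<in> Phi_all V E t. R_bound V E \<phi>) \<le> enat k)"
proof -
  have "finite V" "V \<noteq> {}"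
    using assms by (simp_all add: simple_graph_def connected_graph_def)
  show ?thesis
  proof (intro conjI allI impI)
    fix \<phi> k and A :: "('v, 's, 'm) algorithm"
    assume "\<exists>v. correct V \<phi> v" and "enat k < R_bound V E \<phi>"
    with \<open>finite V\<close> show "\<not> solves_consensus_in V E A \<phi> k"
      using R_bound_le_if_solves_consensus by (metis leD)
  next
    fix t k and A :: "('v, 's, 'm) algorithm"
    assume all: "\<forall>\<phi> \<in> Phi_all V E t. solves_consensus_in V E A \<phi> k"
    show "(SUP \<phi> \<in> Phi_all V E t. R_bound V E \<phi>) \<le> enat k"
    proof (rule SUP_least)
      fix \<phi> assume "\<phi> \<in> Phi_all V E t"
      with all have "solves_consensus_in V E A \<phi> k" by blast
      show "R_bound V E \<phi> \<le> enat k"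
      proof (cases "\<exists>v. correct V \<phi> v")
        case True
        with \<open>finite V\<close> \<open>solves_consensus_in V E A \<phi> k\<close> show ?thesis
          by (intro R_bound_le_if_solves_consensus)
      next
        case False
        with \<open>V \<noteq> {}\<close> show ?thesis by (simp add: R_bound_eq_0_if_no_correct_node)
      qed
    qed
  qed
qed

end
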